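(* Let $L_x=L_y=:L>0$, $L_{xy}\geq 0$, $0<\mu_x\leq L$, $0<\mu_y\leq L$, set $\mu=\min\{\mu_x,\mu_y\}$, and let $t\in\left(0, \tfrac{2\mu}{\mu L+L_{xy}^2}\right)$. Let $$ \alpha=1+\tfrac{1}{2}\left(L^2+\mu^2+2L_{xy}^2\right)t^2-(L+\mu)t +\tfrac{1}{2}(L-\mu)t\sqrt{(Lt + \mu t - 2)^2 + 4L_{xy}^2t^2}. $$ Then the bound $\|x^2-x^\star\|^2+\|y^2-y^\star\|^2\leq\alpha(\|x^1-x^\star\|^2+\|y^1-y^\star\|^2)$ for one step of the gradient descent-ascent method is exact: there exist $n,m$, a function $F\in\mathcal{F}(L_x, L_y, L_{xy}, \mu_x, \mu_y)$ on $\mathbb{R}^n\times\mathbb{R}^m$ with unique saddle point $(x^\star,y^\star)$, and an initial point $(x^1,y^1)\neq(x^\star,y^\star)$ such that $x^{2}=x^1-t\nabla_x F(x^1, y^1)$, $y^{2}=y^1+t\nabla_y F(x^1, y^1)$ satisfy $$ \|x^2-x^\star\|^2+\|y^2-y^\star\|^2= \alpha\left(\|x^1-x^\star\|^2+\|y^1-y^\star\|^2\right). $$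
   Context: $\mathcal{F}(L_x, L_y, L_{xy}, \mu_x, \mu_y)$ denotes the set of differentiable $F:\mathbb{R}^n\times\mathbb{R}^m\to\mathbb{R}$ such that for all $x,x_1,x_2,y,y_1,y_2$: $\|\nabla_x F(x_2, y)-\nabla_x F(x_1, y)\|\leq L_x\|x_2-x_1\|$; $\|\nabla_y F(x, y_2)-\nabla_y F(x, y_1)\|\leq L_y\|y_2-y_1\|$; $\|\nabla_x F(x, y_2)-\nabla_x F(x, y_1)\|\leq L_{xy}\|y_2-y_1\|$; $\|\nabla_y F(x_2, y)-\nabla_y F(x_1, y)\|\leq L_{xy}\|x_2-x_1\|$; $F(\cdot, y)-\tfrac{\mu_x}{2}\|\cdot\|^2$ convex for every $y$ and $F(x,\cdot)+\tfrac{\mu_y}{2}\|\cdot\|^2$ concave for every $x$. A saddle point is $(x^\star,y^\star)$ with $F(x^\star, y)\leq F(x^\star, y^\star)\leq F(x, y^\star)$ for all $x,y$. *)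

theory Defs
  imports "HOL-Analysis.Analysis"
begin

definition grad_x :: "('a::euclidean_space \<Rightarrow> 'b::euclidean_space \<Rightarrow> real) \<Rightarrow> 'a \<Rightarrow> 'b \<Rightarrow> 'a" where
  "grad_x F x y = (THE g. ((\<lambda>u. F u y) has_derivative (\<lambda>h. g \<bullet> h)) (at x))"

definition grad_y :: "('a::euclidean_space \<Rightarrow> 'b::euclidean_space \<Rightarrow> real) \<Rightarrow> 'a \<Rightarrow> 'b \<Rightarrow> 'b" where
  "grad_y F x y = (THE g. ((\<lambda>v. F x v) has_derivative (\<lambda>h. g \<bullet> h)) (at y))"

definition fclass :: "('a::euclidean_space \<Rightarrow> 'b::euclidean_space \<Rightarrow> real) \<Rightarrow> real \<Rightarrow> real \<Rightarrow> real \<Rightarrow> real \<Rightarrow> real \<Rightarrow> bool" where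
  "fclass F Lx Ly Lxy mux muy \<longleftrightarrow>
     (\<forall>z. (\<lambda>p. F (fst p) (snd p)) differentiable (at z)) \<and>
     (\<forall>x1 x2 y. norm (grad_x F x2 y - grad_x F x1 y) \<le> Lx * norm (x2 - x1)) \<and>
     (\<forall>x y1 y2. norm (grad_y F x y2 - grad_y F x y1) \<le> Ly * norm (y2 - y1)) \<and>
     (\<forall>x y1 y2. norm (grad_x F x y2 - grad_x F x y1) \<le> Lxy * norm (y2 - y1)) \<and>
     (\<forall>x1 x2 y. norm (grad_y F x2 y - grad_y F x1 y) \<le> Lxy * norm (x2 - x1)) \<and>
     (\<forall>y. convex_on UNIV (\<lambda>u. F u y - mux / 2 * (norm u)\<^sup>2)) \<and>
     (\<forall>x. concave_on UNIV (\<lambda>v. F x v + muy / 2 * (norm v)\<^sup>2))"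

definition saddle_point :: "('a \<Rightarrow> 'b \<Rightarrow> real) \<Rightarrow> 'a \<Rightarrow> 'b \<Rightarrow> bool" where
  "saddle_point F xs ys \<longleftrightarrow> (\<forall>x y. F xs y \<le> F xs ys \<and> F xs ys \<le> F x ys)"

end

theory Submission
  imports Defs
begin

text \<open>The extremal function is the quadratic
  F(x,y) = A/2 |x|^2 + B (x.e)(y.f) - C/2 |y|^2 with unit vectors e, f: it lies in the
  class when mu_x \<le> A \<le> L, mu_y \<le> C \<le> L and |B| \<le> L_xy, and (0,0) is its only saddle
  point. One gradient descent-ascent step maps the plane spanned by (e,0) and (0,f)
  into itself, and in coordinates (u,v) the squared distance to (0,0) after the step
  is the quadratic form of a symmetric 2x2 matrix. Starting from an eigenvector of its
  top eigenvalue makes the one-step bound an equality, and for B = L_xy and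
  {A,C} = {mu,L} that eigenvalue is alpha.\<close>

lemma convex_on_quadratic:
  fixes w :: "'a::real_inner"
  assumes "0 \<le> k"
  shows "convex_on UNIV (\<lambda>u. k * (u \<bullet> u) + w \<bullet> u + c)"
  unfolding convex_on_def
proof (intro conjI ballI allI impI)
  fix x y :: 'a and a b :: real
  assume ab: "0 \<le> a" "0 \<le> b" "a + b = 1"
  then have b: "b = 1 - a"
    by simp
  have "a * (k * (x \<bullet> x) + w \<bullet> x + c) + b * (k * (y \<bullet> y) + w \<bullet> y + c)
      - (k * ((a *\<^sub>R x + b *\<^sub>R y) \<bullet> (a *\<^sub>R x + b *\<^sub>R y)) + w \<bullet> (a *\<^sub>R x + b *\<^sub>R y) + c)
      = k * a * b * ((x - y) \<bullet> (x - y))"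
    unfolding b by (simp add: inner_commute algebra_simps)
  moreover have "0 \<le> k * a * b * ((x - y) \<bullet> (x - y))"
    using ab assms by simp
  ultimately show "k * ((a *\<^sub>R x + b *\<^sub>R y) \<bullet> (a *\<^sub>R x + b *\<^sub>R y)) + w \<bullet> (a *\<^sub>R x + b *\<^sub>R y) + c
      \<le> a * (k * (x \<bullet> x) + w \<bullet> x + c) + b * (k * (y \<bullet> y) + w \<bullet> y + c)"
    by linarith
qed simp

lemma has_derivative_inner_unique:
  fixes g g' :: "'a::euclidean_space"
  assumes "(f has_derivative (\<lambda>h. g \<bullet> h)) (at x)"
    and "(f has_derivative (\<lambda>h. g' \<bullet> h)) (at x)"
  shows "g = g'"
proof -
  have "g \<bullet> h = g' \<bullet> h" for h
    using has_derivative_unique[OF assms] by metis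
  from this[of "g - g'"] have "(g - g') \<bullet> (g - g') = 0"
    by (simp add: inner_diff_left)
  then show ?thesis
    by simp
qed

lemma grad_x_eqI:
  assumes "((\<lambda>u. F u y) has_derivative (\<lambda>h. g \<bullet> h)) (at x)"
  shows "grad_x F x y = g"
  unfolding grad_x_def using assms has_derivative_inner_unique by blast

lemma grad_y_eqI:
  assumes "((\<lambda>v. F x v) has_derivative (\<lambda>h. g \<bullet> h)) (at y)"
  shows "grad_y F x y = g"
  unfolding grad_y_def using assms has_derivative_inner_unique by blast

definition quadratic_coupling ::
    "real \<Rightarrow> real \<Rightarrow> real \<Rightarrow> 'a::real_inner \<Rightarrow> 'b::real_inner \<Rightarrow> 'a \<Rightarrow> 'b \<Rightarrow> real" where
  "quadratic_coupling A B C e f x y = A / 2 * (x \<bullet> x) + B * (x \<bullet> e) * (y \<bullet> f) - C / 2 * (y \<bullet> y)"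

lemma grad_x_quadratic_coupling:
  "grad_x (quadratic_coupling A B C e f) x y = A *\<^sub>R x + (B * (y \<bullet> f)) *\<^sub>R e"
  unfolding quadratic_coupling_def
  by (rule grad_x_eqI, (rule derivative_eq_intros refl)+)
     (simp add: inner_commute algebra_simps)

lemma grad_y_quadratic_coupling:
  "grad_y (quadratic_coupling A B C e f) x y = (B * (x \<bullet> e)) *\<^sub>R f - C *\<^sub>R y"
  unfolding quadratic_coupling_def
  by (rule grad_y_eqI, (rule derivative_eq_intros refl)+)
     (simp add: inner_commute algebra_simps)

lemma norm_rank_one_le:
  fixes d g :: "'a::real_inner" and h :: "'b::real_normed_vector"
  assumes "norm g = 1" "norm h = 1" "\<bar>B\<bar> \<le> K"
  shows "norm ((B * (d \<bullet> g)) *\<^sub>R h) \<le> K * norm d"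
proof -
  have "norm ((B * (d \<bullet> g)) *\<^sub>R h) = \<bar>B\<bar> * \<bar>d \<bullet> g\<bar>"
    using assms(2) by (simp add: abs_mult)
  also have "\<dots> \<le> K * norm d"
    using Cauchy_Schwarz_ineq2[of d g] assms(1,3) by (intro mult_mono) auto
  finally show ?thesis .
qed

lemma fclass_quadratic_coupling:
  fixes e :: "'a::euclidean_space" and f :: "'b::euclidean_space"
  assumes "norm e = 1" "norm f = 1"
    and "\<bar>A\<bar> \<le> Lx" "\<bar>C\<bar> \<le> Ly" "\<bar>B\<bar> \<le> Lxy" "mux \<le> A" "muy \<le> C"
  shows "fclass (quadratic_coupling A B C e f) Lx Ly Lxy mux muy"
proof -
  let ?F = "quadratic_coupling A B C e f"
  have "(\<lambda>p. ?F (fst p) (snd p)) differentiable (at z)" for z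
  proof -
    have "fst differentiable (at z)" "snd differentiable (at z)"
      by (simp_all add: bounded_linear_imp_differentiable bounded_linear_fst bounded_linear_snd)
    then show ?thesis
      unfolding quadratic_coupling_def by (intro derivative_intros differentiable_inner)
  qed
  moreover have "norm (grad_x ?F x2 y - grad_x ?F x1 y) \<le> Lx * norm (x2 - x1)" for x1 x2 y
    using assms(3) by (simp add: grad_x_quadratic_coupling mult_right_mono flip: scaleR_diff_right)
  moreover have "norm (grad_y ?F x y2 - grad_y ?F x y1) \<le> Ly * norm (y2 - y1)" for x y1 y2
    using assms(4) by (simp add: grad_y_quadratic_coupling mult_right_mono norm_minus_commute
        flip: scaleR_diff_right)
  moreover have "norm (grad_x ?F x y2 - grad_x ?F x y1) \<le> Lxy * norm (y2 - y1)" for x y1 y2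
    using norm_rank_one_le[OF assms(2,1,5), of "y2 - y1"]
    by (simp add: grad_x_quadratic_coupling inner_diff_left algebra_simps)
  moreover have "norm (grad_y ?F x2 y - grad_y ?F x1 y) \<le> Lxy * norm (x2 - x1)" for x1 x2 y
    using norm_rank_one_le[OF assms(1,2,5), of "x2 - x1"]
    by (simp add: grad_y_quadratic_coupling inner_diff_left algebra_simps)
  moreover have "convex_on UNIV (\<lambda>u. ?F u y - mux / 2 * (norm u)\<^sup>2)" for y
  proof -
    have "(\<lambda>u. ?F u y - mux / 2 * (norm u)\<^sup>2)
        = (\<lambda>u. (A - mux) / 2 * (u \<bullet> u) + ((B * (y \<bullet> f)) *\<^sub>R e) \<bullet> u + - C / 2 * (y \<bullet> y))"
      by (rule ext) (simp add: quadratic_coupling_def power2_norm_eq_inner inner_commute field_simps)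
    then show ?thesis
      using assms(6) by (simp only:) (rule convex_on_quadratic, simp)
  qed
  moreover have "concave_on UNIV (\<lambda>v. ?F x v + muy / 2 * (norm v)\<^sup>2)" for x
  proof -
    have "(\<lambda>v. - (?F x v + muy / 2 * (norm v)\<^sup>2))
        = (\<lambda>v. (C - muy) / 2 * (v \<bullet> v) + (- (B * (x \<bullet> e)) *\<^sub>R f) \<bullet> v + - A / 2 * (x \<bullet> x))"
      by (rule ext) (simp add: quadratic_coupling_def power2_norm_eq_inner inner_commute field_simps)
    then show ?thesis
      unfolding concave_on_def using assms(7) by (simp only:) (rule convex_on_quadratic, simp)
  qed
  ultimately show ?thesis
    unfolding fclass_def by blast
qed

lemma saddle_point_quadratic_coupling_iff:
  assumes "0 < A" "0 < C"
  shows "saddle_point (quadratic_coupling A B C e f) a b \<longleftrightarrow> a = 0 \<and> b = 0"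
proof
  assume "saddle_point (quadratic_coupling A B C e f) a b"
  then have "quadratic_coupling A B C e f a 0 \<le> quadratic_coupling A B C e f a b"
    and "quadratic_coupling A B C e f a b \<le> quadratic_coupling A B C e f 0 b"
    unfolding saddle_point_def by blast+
  then have "A / 2 * (a \<bullet> a) + C / 2 * (b \<bullet> b) \<le> 0"
    unfolding quadratic_coupling_def by simp
  moreover have "0 \<le> A / 2 * (a \<bullet> a)" "0 \<le> C / 2 * (b \<bullet> b)"
    using assms by simp_all
  ultimately have "A / 2 * (a \<bullet> a) = 0" "C / 2 * (b \<bullet> b) = 0"
    by linarith+
  then show "a = 0 \<and> b = 0"
    using assms by simp
qed (use assms in \<open>simp add: saddle_point_def quadratic_coupling_def\<close>)

lemma gda_step_quadratic_coupling:
  fixes e :: "'a::euclidean_space" and f :: "'b::euclidean_space" and A B C t u v :: real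
  assumes "norm e = 1" "norm f = 1"
  defines "F \<equiv> quadratic_coupling A B C e f"
  shows "(norm (u *\<^sub>R e - t *\<^sub>R grad_x F (u *\<^sub>R e) (v *\<^sub>R f)))\<^sup>2
       + (norm (v *\<^sub>R f + t *\<^sub>R grad_y F (u *\<^sub>R e) (v *\<^sub>R f)))\<^sup>2
       = ((1 - t * A)\<^sup>2 + t\<^sup>2 * B\<^sup>2) * u\<^sup>2 + 2 * (t\<^sup>2 * B * (A - C)) * u * v
         + ((1 - t * C)\<^sup>2 + t\<^sup>2 * B\<^sup>2) * v\<^sup>2"
proof -
  have "e \<bullet> e = 1" "f \<bullet> f = 1"
    using assms(1,2) by (simp_all add: norm_eq_1)
  then have x_step: "u *\<^sub>R e - t *\<^sub>R grad_x F (u *\<^sub>R e) (v *\<^sub>R f) = (u * (1 - t * A) - t * B * v) *\<^sub>R e"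
    and y_step: "v *\<^sub>R f + t *\<^sub>R grad_y F (u *\<^sub>R e) (v *\<^sub>R f) = (v * (1 - t * C) + t * B * u) *\<^sub>R f"
    by (simp_all add: F_def grad_x_quadratic_coupling grad_y_quadratic_coupling algebra_simps)
  show ?thesis
    unfolding x_step y_step using assms(1,2)
    by (simp add: power_mult_distrib) (simp add: power2_eq_square algebra_simps)
qed

lemma quadratic_form_attains_top_eigenvalue:
  fixes p q r :: real
  obtains u v where "(u, v) \<noteq> (0, 0)"
    and "p * u\<^sup>2 + 2 * q * u * v + r * v\<^sup>2
       = ((p + r) / 2 + sqrt (((p - r) / 2)\<^sup>2 + q\<^sup>2)) * (u\<^sup>2 + v\<^sup>2)"
proof -
  define lam where "lam = (p + r) / 2 + sqrt (((p - r) / 2)\<^sup>2 + q\<^sup>2)"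
  have "(lam - p) * (lam - r) = (sqrt (((p - r) / 2)\<^sup>2 + q\<^sup>2))\<^sup>2 - ((p - r) / 2)\<^sup>2"
    unfolding lam_def by (simp add: power2_eq_square field_simps)
  then have root: "(lam - p) * (lam - r) = q\<^sup>2"
    by simp
  show ?thesis
  proof (cases "q = 0")
    case True
    with root have "lam = p \<or> lam = r"
      by simp
    then show ?thesis
      using that[of 1 0] that[of 0 1] True unfolding lam_def by auto
  next
    case False
    have "p * q\<^sup>2 + 2 * q * q * (lam - p) + r * (lam - p)\<^sup>2 - lam * (q\<^sup>2 + (lam - p)\<^sup>2)
        = (lam - p) * (q\<^sup>2 - (lam - p) * (lam - r))"
      by (simp add: power2_eq_square field_simps)
    with root have "p * q\<^sup>2 + 2 * q * q * (lam - p) + r * (lam - p)\<^sup>2 = lam * (q\<^sup>2 + (lam - p)\<^sup>2)"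
      by simp
    then show ?thesis
      using that[of q "lam - p"] False unfolding lam_def by simp
  qed
qed

lemma gda_top_eigenvalue_eq:
  fixes A B C t :: real
  defines "p \<equiv> (1 - t * A)\<^sup>2 + t\<^sup>2 * B\<^sup>2" and "r \<equiv> (1 - t * C)\<^sup>2 + t\<^sup>2 * B\<^sup>2"
    and "q \<equiv> t\<^sup>2 * B * (A - C)"
  shows "(p + r) / 2 + sqrt (((p - r) / 2)\<^sup>2 + q\<^sup>2)
       = 1 + 1/2 * (A\<^sup>2 + C\<^sup>2 + 2 * B\<^sup>2) * t\<^sup>2 - (A + C) * t
         + 1/2 * \<bar>A - C\<bar> * \<bar>t\<bar> * sqrt ((A * t + C * t - 2)\<^sup>2 + 4 * B\<^sup>2 * t\<^sup>2)"
proof -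
  have "((p - r) / 2)\<^sup>2 + q\<^sup>2 = ((A - C) * t / 2)\<^sup>2 * ((A * t + C * t - 2)\<^sup>2 + 4 * B\<^sup>2 * t\<^sup>2)"
    unfolding p_def r_def q_def by (simp add: power2_eq_square field_simps)
  then have "sqrt (((p - r) / 2)\<^sup>2 + q\<^sup>2) = 1/2 * \<bar>A - C\<bar> * \<bar>t\<bar> * sqrt ((A * t + C * t - 2)\<^sup>2 + 4 * B\<^sup>2 * t\<^sup>2)"
    by (simp add: real_sqrt_mult abs_mult)
  moreover have "(p + r) / 2 = 1 + 1/2 * (A\<^sup>2 + C\<^sup>2 + 2 * B\<^sup>2) * t\<^sup>2 - (A + C) * t"
    unfolding p_def r_def by (simp add: power2_eq_square field_simps)
  ultimately show ?thesis
    by linarith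
qed

lemma gda_quadratic_coupling_attains_rate:
  fixes e :: "'a::euclidean_space" and f :: "'b::euclidean_space" and A B C t :: real
  assumes "norm e = 1" "norm f = 1"
  defines "F \<equiv> quadratic_coupling A B C e f"
    and "\<rho> \<equiv> 1 + 1/2 * (A\<^sup>2 + C\<^sup>2 + 2 * B\<^sup>2) * t\<^sup>2 - (A + C) * t
         + 1/2 * \<bar>A - C\<bar> * \<bar>t\<bar> * sqrt ((A * t + C * t - 2)\<^sup>2 + 4 * B\<^sup>2 * t\<^sup>2)"
  obtains u v where "(u *\<^sub>R e, v *\<^sub>R f) \<noteq> (0, 0)"
    and "(norm (u *\<^sub>R e - t *\<^sub>R grad_x F (u *\<^sub>R e) (v *\<^sub>R f)))\<^sup>2
       + (norm (v *\<^sub>R f + t *\<^sub>R grad_y F (u *\<^sub>R e) (v *\<^sub>R f)))\<^sup>2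
       = \<rho> * ((norm (u *\<^sub>R e))\<^sup>2 + (norm (v *\<^sub>R f))\<^sup>2)"
proof -
  obtain u v where "(u, v) \<noteq> (0, 0)"
    and "((1 - t * A)\<^sup>2 + t\<^sup>2 * B\<^sup>2) * u\<^sup>2 + 2 * (t\<^sup>2 * B * (A - C)) * u * v
         + ((1 - t * C)\<^sup>2 + t\<^sup>2 * B\<^sup>2) * v\<^sup>2 = \<rho> * (u\<^sup>2 + v\<^sup>2)"
    by (rule quadratic_form_attains_top_eigenvalue[of "(1 - t * A)\<^sup>2 + t\<^sup>2 * B\<^sup>2"
          "t\<^sup>2 * B * (A - C)" "(1 - t * C)\<^sup>2 + t\<^sup>2 * B\<^sup>2", unfolded gda_top_eigenvalue_eq \<rho>_def[symmetric]])
  moreover have "e \<noteq> 0" "f \<noteq> 0"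
    using assms(1,2) by auto
  ultimately show ?thesis
    using that[of u v] gda_step_quadratic_coupling[OF assms(1,2), of u t A B C v] assms(1,2)
    by (simp add: F_def)
qed

theorem proposition2p4:
  fixes L Lxy mux muy t :: real
  assumes "L > 0" and "Lxy \<ge> 0"
    and "0 < mux" and "mux \<le> L" and "0 < muy" and "muy \<le> L"
    and "0 < t" and "t < 2 * min mux muy / (min mux muy * L + Lxy\<^sup>2)"
  shows "let \<mu> = min mux muy;
             \<alpha> = 1 + 1/2 * (L\<^sup>2 + \<mu>\<^sup>2 + 2 * Lxy\<^sup>2) * t\<^sup>2 - (L + \<mu>) * t
                 + 1/2 * (L - \<mu>) * t * sqrt ((L * t + \<mu> * t - 2)\<^sup>2 + 4 * Lxy\<^sup>2 * t\<^sup>2)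
         in \<exists>(F :: real^'n \<Rightarrow> real^'m \<Rightarrow> real) xs ys x1 y1.
              fclass F L L Lxy mux muy \<and>
              saddle_point F xs ys \<and>
              (\<forall>a b. saddle_point F a b \<longrightarrow> a = xs \<and> b = ys) \<and>
              (x1, y1) \<noteq> (xs, ys) \<and>
              (let x2 = x1 - t *\<^sub>R grad_x F x1 y1;
                   y2 = y1 + t *\<^sub>R grad_y F x1 y1
               in (norm (x2 - xs))\<^sup>2 + (norm (y2 - ys))\<^sup>2
                  = \<alpha> * ((norm (x1 - xs))\<^sup>2 + (norm (y1 - ys))\<^sup>2))"
proof -
  define \<mu> where "\<mu> = min mux muy"
  define \<alpha> where "\<alpha> = 1 + 1/2 * (L\<^sup>2 + \<mu>\<^sup>2 + 2 * Lxy\<^sup>2) * t\<^sup>2 - (L + \<mu>) * t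
                 + 1/2 * (L - \<mu>) * t * sqrt ((L * t + \<mu> * t - 2)\<^sup>2 + 4 * Lxy\<^sup>2 * t\<^sup>2)"
  obtain A C where AC: "(A, C) = (\<mu>, L) \<or> (A, C) = (L, \<mu>)"
    and bounds: "mux \<le> A" "muy \<le> C" "0 < A" "0 < C" "A \<le> L" "C \<le> L"
    using that[of mux L] that[of L muy] assms(1,3-6) unfolding \<mu>_def
    by (cases "mux \<le> muy") simp_all
  have \<alpha>: "\<alpha> = 1 + 1/2 * (A\<^sup>2 + C\<^sup>2 + 2 * Lxy\<^sup>2) * t\<^sup>2 - (A + C) * t
      + 1/2 * \<bar>A - C\<bar> * \<bar>t\<bar> * sqrt ((A * t + C * t - 2)\<^sup>2 + 4 * Lxy\<^sup>2 * t\<^sup>2)"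
    using AC bounds assms(7) unfolding \<alpha>_def by (auto simp: algebra_simps)
  define e :: "real^'n" where "e = axis undefined 1"
  define f :: "real^'m" where "f = axis undefined 1"
  have unit: "norm e = 1" "norm f = 1"
    by (simp_all add: e_def f_def)
  let ?F = "quadratic_coupling A Lxy C e f"
  obtain u v where "(u *\<^sub>R e, v *\<^sub>R f) \<noteq> (0, 0)"
    and "(norm (u *\<^sub>R e - t *\<^sub>R grad_x ?F (u *\<^sub>R e) (v *\<^sub>R f)))\<^sup>2
       + (norm (v *\<^sub>R f + t *\<^sub>R grad_y ?F (u *\<^sub>R e) (v *\<^sub>R f)))\<^sup>2
       = \<alpha> * ((norm (u *\<^sub>R e))\<^sup>2 + (norm (v *\<^sub>R f))\<^sup>2)"
    by (rule gda_quadratic_coupling_attains_rate[OF unit, where A = A and B = Lxy and C = C and t = t,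
          folded \<alpha>])
  moreover have "fclass ?F L L Lxy mux muy"
    using assms(2) bounds by (intro fclass_quadratic_coupling[OF unit]) simp_all
  moreover have "saddle_point ?F a b \<longleftrightarrow> a = 0 \<and> b = 0" for a b
    using bounds(3,4) by (rule saddle_point_quadratic_coupling_iff)
  ultimately show ?thesis
    unfolding Let_def \<mu>_def[symmetric] \<alpha>_def[symmetric]
    by (intro exI[of _ ?F] exI[of _ 0] exI[of _ "u *\<^sub>R e"] exI[of _ "v *\<^sub>R f"])
      (simp add: unit)
qed

end
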